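(* Let $N,M,r$ be positive integers and let $\xi^{1},\dots,\xi^{M}\in\{-1,+1\}^{N}$ be memory-vectors such that the Hamming distance between any two distinct memory-vectors is at least $\tau N$ for some $\tau>0$. Let $0<\rho<\frac{\tau}{2}$ and suppose $$M\le \exp\big(2N(\tau-2\rho)\big)\,\frac{1-e^{-2}}{2e^{2}}.$$ Let $E_{\mathrm{rand}}$ be the compact associative memory energy defined in the context (built from $r$ i.i.d. Gaussian random features $\omega_1,\dots,\omega_r\sim\mathcal N(0,\mathbf I_N)$ via the map $\phi_{F++}$ with any parameter $s\in(0,1)$). Then for every $l\in\{1,\dots,M\}$, every input $\widehat{\xi}^{l}\in\{-1,+1\}^N$ at Hamming distance at most $\rho N$ from $\xi^{l}$, and every coordinate $i\in\{1,\dots,N\}$, letting $\tilde{\xi}^{l}$ denote $\widehat{\xi}^{l}$ with its $i$-th coordinate negated and $\Delta(E_{\mathrm{rand}})=E_{\mathrm{rand}}(\tilde{\xi}^{l};\xi^1,\dots,\xi^M)-E_{\mathrm{rand}}(\widehat{\xi}^{l};\xi^1,\dots,\xi^M)$, the following holds: if $\widehat{\xi}^{l}_i=\xi^{l}_i$ (so the flip increases the Hamming distance to $\xi^l$) then $\mathbb{E}[\Delta(E_{\mathrm{rand}})]>0$, and if $\widehat{\xi}^{l}_i=-\xi^{l}_i$ (so the flip decreases the distance to $\xi^l$) then $\mathbb{E}[\Delta(E_{\mathrm{rand}})]<0$, where the expectation is over $\omega_1,\dots,\omega_r$.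
   Context: FAVOR++ random features: fix a parameter $s\in(0,1)$ and set $A=1-\frac{1}{s}$, $\widehat A=-A>0$, $B=\sqrt{1+4\widehat A}$, $C=-\frac12$, $D=(1+4\widehat A)^{N/4}$. For i.i.d. $\omega_1,\dots,\omega_r\sim\mathcal N(0,\mathbf I_N)$ define $\phi_{F++}:\mathbb R^N\to\mathbb R^r$ by $$\phi_{F++}(\mathbf z)=\frac{D}{\sqrt r}\Big(\exp\big(-\widehat A\|\omega_k\|_2^2+B\,\omega_k^\top\mathbf z+C\|\mathbf z\|_2^2\big)\Big)_{k=1}^{r}.$$ (This gives an unbiased estimator of the softmax kernel: $\mathbb E[\phi_{F++}(\mathbf x)^\top\phi_{F++}(\mathbf y)]=\exp(\mathbf x^\top\mathbf y)$.) The compact associative memory energy of an input $\xi\in\{-1,+1\}^N$ given memories $\xi^1,\dots,\xi^M$ is $$E_{\mathrm{rand}}(\xi;\xi^1,\dots,\xi^M)=\phi_{F++}(\xi)^\top\mathbf M,\qquad \mathbf M=-\sum_{\mu=1}^{M}\phi_{F++}(\xi^{\mu}),$$ with the same random vectors $\omega_k$ used throughout. *)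

theory Defs
  imports "HOL-Probability.Probability"
begin

text \<open>Vectors in R^N / {-1,+1}^N are represented as functions nat => real,
  only the coordinates 0..N-1 matter. The r random vectors omega_1..omega_r are
  packed into one function omega :: nat * nat => real, omega(k,j) = j-th coordinate
  of omega_k, k < r, j < N.\<close>

definition pm1_vec :: "nat \<Rightarrow> (nat \<Rightarrow> real) \<Rightarrow> bool" where
  "pm1_vec N x \<longleftrightarrow> (\<forall>i<N. x i = 1 \<or> x i = -1)"

definition hamming :: "nat \<Rightarrow> (nat \<Rightarrow> real) \<Rightarrow> (nat \<Rightarrow> real) \<Rightarrow> nat" where
  "hamming N x y = card {i\<in>{..<N}. x i \<noteq> y i}"

definition phi_Fpp :: "real \<Rightarrow> nat \<Rightarrow> nat \<Rightarrow> (nat \<times> nat \<Rightarrow> real) \<Rightarrow> (nat \<Rightarrow> real) \<Rightarrow> nat \<Rightarrow> real" where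
  "phi_Fpp s N r \<omega> z k =
     (let A = 1 - 1 / s; Ahat = - A; B = sqrt (1 + 4 * Ahat); C = - 1 / 2;
          D = (1 + 4 * Ahat) powr (real N / 4)
      in D / sqrt (real r) *
         exp (- Ahat * (\<Sum>j<N. (\<omega> (k, j))\<^sup>2) + B * (\<Sum>j<N. \<omega> (k, j) * z j)
              + C * (\<Sum>j<N. (z j)\<^sup>2)))"

definition E_rand :: "real \<Rightarrow> nat \<Rightarrow> nat \<Rightarrow> (nat \<times> nat \<Rightarrow> real) \<Rightarrow> nat \<Rightarrow> (nat \<Rightarrow> nat \<Rightarrow> real)
                        \<Rightarrow> (nat \<Rightarrow> real) \<Rightarrow> real" where
  "E_rand s N r \<omega> M \<xi> x =
     (\<Sum>k<r. phi_Fpp s N r \<omega> x k * (- (\<Sum>\<mu>\<in>{1..M}. phi_Fpp s N r \<omega> (\<xi> \<mu>) k)))"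

definition gauss_features :: "nat \<Rightarrow> nat \<Rightarrow> (nat \<times> nat \<Rightarrow> real) measure" where
  "gauss_features N r = PiM ({..<r} \<times> {..<N}) (\<lambda>_. std_normal_distribution)"

end

theory Submission
  imports Defs
begin

text \<open>The FAVOR++ features are unbiased: a coordinatewise Gaussian integral gives
  \<open>\<bbbE>[\<phi>(x)\<^sub>k \<phi>(y)\<^sub>k] = exp \<langle>x, y\<rangle> / r\<close>. Hence the expected energy of \<open>x\<close> is
  \<open>- \<Sum>\<^sub>\<mu> exp \<langle>x, \<xi>\<^sup>\<mu>\<rangle>\<close>, and flipping coordinate \<open>i\<close> of \<open>\<xi>hat\<close> changes it in expectation by
  \<open>\<Sum>\<^sub>\<mu> exp \<langle>\<xi>hat, \<xi>\<^sup>\<mu>\<rangle> (1 - exp (-2 \<xi>hat\<^sub>i \<xi>\<^sup>\<mu>\<^sub>i))\<close>, a sum whose \<open>\<mu>\<close>-th term has the sign of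
  \<open>\<xi>hat\<^sub>i \<xi>\<^sup>\<mu>\<^sub>i\<close>. Since \<open>\<langle>x, y\<rangle> = N - 2 d(x, y)\<close> for sign vectors, the term \<open>\<mu> = l\<close> has modulus
  at least \<open>exp (N - 2\<rho>N) (1 - e\<^sup>-\<^sup>2)\<close>, while by the triangle inequality for the Hamming distance
  every other term has modulus at most \<open>exp (N - 2(\<tau> - \<rho>)N) (e\<^sup>2 - 1)\<close>. The bound on \<open>M\<close> makes
  the \<open>M - 1\<close> crosstalk terms together smaller than the signal term, so the expected change
  has the sign of \<open>\<xi>hat\<^sub>i \<xi>\<^sup>l\<^sub>i\<close>.\<close>

lemma has_bochner_integral_std_normal_exp_quadratic:
  fixes c b :: real
  assumes c: "c > 0"
  shows "has_bochner_integral std_normal_distribution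
           (\<lambda>t. exp ((1 - c) / 2 * t\<^sup>2 + b * t)) (exp (b\<^sup>2 / (2 * c)) / sqrt c)"
proof -
  define K where "K = exp (b\<^sup>2 / (2 * c)) / sqrt c"
  have density: "std_normal_density t * exp ((1 - c) / 2 * t\<^sup>2 + b * t)
                   = K * normal_density (b / c) (1 / sqrt c) t" for t
  proof -
    have "- (t - b / c)\<^sup>2 / (2 * (1 / sqrt c)\<^sup>2) = - c * t\<^sup>2 / 2 + b * t - b\<^sup>2 / (2 * c)"
      using c by (simp add: power_divide field_simps power2_eq_square)
    moreover have "sqrt (2 * pi * (1 / sqrt c)\<^sup>2) = sqrt (2 * pi) / sqrt c"
      using c by (simp add: real_sqrt_divide power_divide)
    ultimately have "K * normal_density (b / c) (1 / sqrt c) t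
        = exp (- c * t\<^sup>2 / 2 + b * t) / sqrt (2 * pi)"
      using c by (simp add: K_def normal_density_def exp_add[symmetric])
    also have "\<dots> = std_normal_density t * exp ((1 - c) / 2 * t\<^sup>2 + b * t)"
      by (simp add: std_normal_density_def normal_density_def exp_add[symmetric] field_simps)
    finally show ?thesis ..
  qed
  have "has_bochner_integral lborel (\<lambda>t. K * normal_density (b / c) (1 / sqrt c) t) (K * 1)"
    using c by (intro has_bochner_integral_mult_right)
      (simp add: has_bochner_integral_iff)
  then have "has_bochner_integral lborel
               (\<lambda>t. std_normal_density t *\<^sub>R exp ((1 - c) / 2 * t\<^sup>2 + b * t)) K"
    by (simp only: real_scaleR_def density mult_1_right)
  then show ?thesis
    unfolding K_def[symmetric] by (intro has_bochner_integral_density) auto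
qed

lemma prod_Times_if_fst:
  fixes k r :: nat
  assumes "k < r"
  shows "(\<Prod>p\<in>{..<r} \<times> A. if fst p = k then g (snd p) else 1) = prod g A"
proof -
  have "(\<Prod>p\<in>{..<r} \<times> A. if fst p = k then g (snd p) else 1)
      = (\<Prod>k'<r. \<Prod>j\<in>A. if k' = k then g j else 1)"
    by (simp add: prod.cartesian_product case_prod_beta)
  also have "\<dots> = (\<Prod>k'<r. if k' = k then prod g A else 1)"
    by (intro prod.cong) auto
  also have "\<dots> = prod g A"
    using assms by (subst prod.delta) auto
  finally show ?thesis .
qed

lemma has_bochner_integral_gauss_features_row:
  fixes f :: "nat \<Rightarrow> real \<Rightarrow> real"
  assumes "k < r"
    and f: "\<And>j. j < N \<Longrightarrow> has_bochner_integral std_normal_distribution (f j) (I j)"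
  shows "has_bochner_integral (gauss_features N r) (\<lambda>\<omega>. \<Prod>j<N. f j (\<omega> (k, j))) (\<Prod>j<N. I j)"
proof -
  interpret S: prob_space std_normal_distribution
    by (rule prob_space_normal_density) simp
  interpret P: product_sigma_finite "\<lambda>_::nat \<times> nat. std_normal_distribution"
    by (simp add: product_sigma_finite_def S.sigma_finite_measure_axioms)
  define F where "F p = (if fst p = k then f (snd p) else (\<lambda>_. 1))" for p
  have F: "has_bochner_integral std_normal_distribution (F p) (if fst p = k then I (snd p) else 1)"
    if "p \<in> {..<r} \<times> {..<N}" for p
    using f that S.prob_space by (auto simp: F_def has_bochner_integral_iff)
  have "has_bochner_integral (gauss_features N r) (\<lambda>\<omega>. \<Prod>p\<in>{..<r} \<times> {..<N}. F p (\<omega> p))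
          (\<Prod>p\<in>{..<r} \<times> {..<N}. if fst p = k then I (snd p) else 1)"
    using F P.product_integral_prod[of "{..<r} \<times> {..<N}" F] P.product_integrable_prod[of "{..<r} \<times> {..<N}" F]
    by (simp add: gauss_features_def has_bochner_integral_iff cong: prod.cong)
  moreover have "(\<Prod>p\<in>{..<r} \<times> {..<N}. F p (\<omega> p)) = (\<Prod>j<N. f j (\<omega> (k, j)))" for \<omega>
  proof -
    have "(\<Prod>p\<in>{..<r} \<times> {..<N}. F p (\<omega> p))
        = (\<Prod>p\<in>{..<r} \<times> {..<N}. if fst p = k then f (snd p) (\<omega> (k, snd p)) else 1)"
      by (intro prod.cong) (auto simp: F_def)
    also have "\<dots> = (\<Prod>j<N. f j (\<omega> (k, j)))"
      by (rule prod_Times_if_fst[OF \<open>k < r\<close>])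
    finally show ?thesis .
  qed
  ultimately show ?thesis
    by (simp add: prod_Times_if_fst[OF \<open>k < r\<close>])
qed

lemma phi_Fpp_mult:
  fixes s :: real and x y :: "nat \<Rightarrow> real"
  defines "c \<equiv> 1 + 4 * (1 / s - 1)"
  shows "phi_Fpp s N r \<omega> x k * phi_Fpp s N r \<omega> y k
    = c powr (real N / 2) / real r * exp (- (\<Sum>j<N. (x j)\<^sup>2 + (y j)\<^sup>2) / 2)
      * (\<Prod>j<N. exp ((1 - c) / 2 * (\<omega> (k, j))\<^sup>2 + sqrt c * (x j + y j) * \<omega> (k, j)))"
proof -
  define E where "E z = - (1 / s - 1) * (\<Sum>j<N. (\<omega> (k, j))\<^sup>2) + sqrt c * (\<Sum>j<N. \<omega> (k, j) * z j)
    - 1 / 2 * (\<Sum>j<N. (z j)\<^sup>2)" for z :: "nat \<Rightarrow> real"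
  have phi: "phi_Fpp s N r \<omega> z k = c powr (real N / 4) / sqrt (real r) * exp (E z)" for z
    by (simp add: phi_Fpp_def c_def E_def)
  have "E x + E y
      = (\<Sum>j<N. 2 * (- (1 / s - 1) * (\<omega> (k, j))\<^sup>2) + sqrt c * (\<omega> (k, j) * x j)
          + sqrt c * (\<omega> (k, j) * y j) - 1 / 2 * (x j)\<^sup>2 - 1 / 2 * (y j)\<^sup>2)"
    by (simp add: E_def sum.distrib sum_subtractf sum_distrib_left)
  also have "\<dots> = (\<Sum>j<N. (1 - c) / 2 * (\<omega> (k, j))\<^sup>2 + sqrt c * (x j + y j) * \<omega> (k, j)
          - ((x j)\<^sup>2 + (y j)\<^sup>2) / 2)"
    by (intro sum.cong) (simp_all add: c_def algebra_simps diff_divide_distrib)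
  also have "\<dots> = - (\<Sum>j<N. (x j)\<^sup>2 + (y j)\<^sup>2) / 2
        + (\<Sum>j<N. (1 - c) / 2 * (\<omega> (k, j))\<^sup>2 + sqrt c * (x j + y j) * \<omega> (k, j))"
    by (simp add: sum_subtractf sum_divide_distrib[symmetric])
  finally have exponent: "E x + E y = \<dots>" .
  have "phi_Fpp s N r \<omega> x k * phi_Fpp s N r \<omega> y k
      = (c powr (real N / 4) / sqrt (real r))\<^sup>2 * exp (E x + E y)"
    by (simp add: phi exp_add power2_eq_square)
  also have "(c powr (real N / 4) / sqrt (real r))\<^sup>2 = c powr (real N / 2) / real r"
    by (simp add: power_divide powr_add[symmetric] power2_eq_square)
  finally show ?thesis
    by (simp only: exponent exp_sum[symmetric] finite_lessThan exp_add[symmetric] mult.assoc)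
qed

lemma phi_Fpp_unbiased:
  fixes s :: real and x y :: "nat \<Rightarrow> real"
  assumes "0 < s" and "s < 4 / 3" and "k < r"
  shows "has_bochner_integral (gauss_features N r)
           (\<lambda>\<omega>. phi_Fpp s N r \<omega> x k * phi_Fpp s N r \<omega> y k) (exp (\<Sum>j<N. x j * y j) / real r)"
proof -
  define c where "c = 1 + 4 * (1 / s - 1)"
  have "c > 0"
    using assms by (simp add: c_def field_simps)
  define K where "K = c powr (real N / 2) / real r * exp (- (\<Sum>j<N. (x j)\<^sup>2 + (y j)\<^sup>2) / 2)"
  have "has_bochner_integral (gauss_features N r)
      (\<lambda>\<omega>. \<Prod>j<N. exp ((1 - c) / 2 * (\<omega> (k, j))\<^sup>2 + sqrt c * (x j + y j) * \<omega> (k, j)))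
      (\<Prod>j<N. exp ((x j + y j)\<^sup>2 / 2) / sqrt c)"
  proof (rule has_bochner_integral_gauss_features_row[OF \<open>k < r\<close>])
    fix j
    show "has_bochner_integral std_normal_distribution
        (\<lambda>t. exp ((1 - c) / 2 * t\<^sup>2 + sqrt c * (x j + y j) * t)) (exp ((x j + y j)\<^sup>2 / 2) / sqrt c)"
      using has_bochner_integral_std_normal_exp_quadratic[OF \<open>c > 0\<close>, of "sqrt c * (x j + y j)"] \<open>c > 0\<close>
      by (simp add: power_mult_distrib)
  qed
  then have "has_bochner_integral (gauss_features N r)
      (\<lambda>\<omega>. phi_Fpp s N r \<omega> x k * phi_Fpp s N r \<omega> y k) (K * (\<Prod>j<N. exp ((x j + y j)\<^sup>2 / 2) / sqrt c))"
    unfolding phi_Fpp_mult c_def[symmetric] K_def[symmetric] by (rule has_bochner_integral_mult_right)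
  moreover have "K * (\<Prod>j<N. exp ((x j + y j)\<^sup>2 / 2) / sqrt c) = exp (\<Sum>j<N. x j * y j) / real r"
  proof -
    have "sqrt c ^ N = c powr (real N / 2)"
      using \<open>c > 0\<close> by (simp add: powr_half_sqrt[symmetric] powr_realpow[symmetric] powr_powr)
    moreover have "(\<Sum>j<N. (x j + y j)\<^sup>2 / 2) = (\<Sum>j<N. (x j)\<^sup>2 + (y j)\<^sup>2) / 2 + (\<Sum>j<N. x j * y j)"
      by (simp add: power2_sum sum.distrib sum_divide_distrib add_divide_distrib)
    ultimately show ?thesis
      using \<open>c > 0\<close> by (simp add: K_def prod_dividef exp_sum[symmetric] exp_add[symmetric])
  qed
  ultimately show ?thesis
    by simp
qed

lemma has_bochner_integral_E_rand:
  assumes "0 < s" and "s < 4 / 3" and "r > 0"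
  shows "has_bochner_integral (gauss_features N r) (\<lambda>\<omega>. E_rand s N r \<omega> M \<xi> x)
           (- (\<Sum>\<mu>\<in>{1..M}. exp (\<Sum>j<N. x j * \<xi> \<mu> j)))"
proof -
  have "E_rand s N r \<omega> M \<xi> x = - (\<Sum>\<mu>\<in>{1..M}. \<Sum>k<r. phi_Fpp s N r \<omega> x k * phi_Fpp s N r \<omega> (\<xi> \<mu>) k)"
    for \<omega>
    unfolding E_rand_def by (simp add: sum_distrib_left sum_negf sum.swap[of _ "{..<r}"])
  moreover have "has_bochner_integral (gauss_features N r)
      (\<lambda>\<omega>. - (\<Sum>\<mu>\<in>{1..M}. \<Sum>k<r. phi_Fpp s N r \<omega> x k * phi_Fpp s N r \<omega> (\<xi> \<mu>) k))
      (- (\<Sum>\<mu>\<in>{1..M}. \<Sum>k<r. exp (\<Sum>j<N. x j * \<xi> \<mu> j) / real r))"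
    using assms by (intro has_bochner_integral_minus has_bochner_integral_sum phi_Fpp_unbiased) auto
  ultimately show ?thesis
    using \<open>r > 0\<close> by simp
qed

lemma expectation_E_rand_flip:
  fixes x :: "nat \<Rightarrow> real"
  assumes "0 < s" and "s < 4 / 3" and "r > 0" and "i < N"
  shows "(\<integral>\<omega>. E_rand s N r \<omega> M \<xi> (x(i := - x i)) - E_rand s N r \<omega> M \<xi> x \<partial>gauss_features N r)
    = (\<Sum>\<mu>\<in>{1..M}. exp (\<Sum>j<N. x j * \<xi> \<mu> j) * (1 - exp (- 2 * (x i * \<xi> \<mu> i))))"
proof -
  have flip: "(\<Sum>j<N. (x(i := - x i)) j * \<xi> \<mu> j) = (\<Sum>j<N. x j * \<xi> \<mu> j) - 2 * (x i * \<xi> \<mu> i)" for \<mu>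
  proof -
    have "(\<Sum>j<N. (x(i := - x i)) j * \<xi> \<mu> j) = (\<Sum>j<N. x j * \<xi> \<mu> j - (if j = i then 2 * (x i * \<xi> \<mu> i) else 0))"
      by (intro sum.cong) auto
    then show ?thesis
      using \<open>i < N\<close> by (simp add: sum_subtractf)
  qed
  have "has_bochner_integral (gauss_features N r) (\<lambda>\<omega>. E_rand s N r \<omega> M \<xi> (x(i := - x i)))
      (- (\<Sum>\<mu>\<in>{1..M}. exp ((\<Sum>j<N. x j * \<xi> \<mu> j) - 2 * (x i * \<xi> \<mu> i))))"
    using has_bochner_integral_E_rand[OF assms(1-3), where N = N and M = M and \<xi> = \<xi> and x = "x(i := - x i)"]
    by (simp only: flip)
  from has_bochner_integral_diff[OF this has_bochner_integral_E_rand[OF assms(1-3), where x = x]]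
  have "(\<integral>\<omega>. E_rand s N r \<omega> M \<xi> (x(i := - x i)) - E_rand s N r \<omega> M \<xi> x \<partial>gauss_features N r)
    = - (\<Sum>\<mu>\<in>{1..M}. exp ((\<Sum>j<N. x j * \<xi> \<mu> j) - 2 * (x i * \<xi> \<mu> i)))
      - - (\<Sum>\<mu>\<in>{1..M}. exp (\<Sum>j<N. x j * \<xi> \<mu> j))"
    by (rule has_bochner_integral_integral_eq)
  then show ?thesis
    by (simp add: sum_subtractf[symmetric] right_diff_distrib exp_add[symmetric])
qed

lemma hamming_commute: "hamming N x y = hamming N y x"
  unfolding hamming_def by (metis (mono_tags, lifting))

lemma hamming_triangle: "hamming N x z \<le> hamming N x y + hamming N y z"
proof -
  have "{i\<in>{..<N}. x i \<noteq> z i} \<subseteq> {i\<in>{..<N}. x i \<noteq> y i} \<union> {i\<in>{..<N}. y i \<noteq> z i}"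
    by auto
  then have "card {i\<in>{..<N}. x i \<noteq> z i} \<le> card ({i\<in>{..<N}. x i \<noteq> y i} \<union> {i\<in>{..<N}. y i \<noteq> z i})"
    by (intro card_mono) auto
  also have "\<dots> \<le> card {i\<in>{..<N}. x i \<noteq> y i} + card {i\<in>{..<N}. y i \<noteq> z i}"
    by (rule card_Un_le)
  finally show ?thesis
    unfolding hamming_def .
qed

lemma pm1_vec_inner_hamming:
  assumes "pm1_vec N x" and "pm1_vec N y"
  shows "(\<Sum>j<N. x j * y j) = real N - 2 * real (hamming N x y)"
proof -
  have "(\<Sum>j<N. x j * y j) = (\<Sum>j<N. 1 - 2 * (if x j \<noteq> y j then 1 else 0))"
  proof (intro sum.cong refl)
    fix j assume "j \<in> {..<N}"
    then have "x j = 1 \<or> x j = -1" "y j = 1 \<or> y j = -1"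
      using assms unfolding pm1_vec_def by auto
    then show "x j * y j = 1 - 2 * (if x j \<noteq> y j then 1 else 0)"
      by auto
  qed
  also have "\<dots> = real N - 2 * real (hamming N x y)"
    by (simp add: sum_subtractf sum_distrib_left[symmetric] sum.If_cases hamming_def Int_def conj_commute)
  finally show ?thesis .
qed

lemma sgn_sum_dominant_term:
  fixes T :: "'a \<Rightarrow> real"
  assumes "finite A" and "l \<in> A" and "(\<Sum>\<mu>\<in>A - {l}. \<bar>T \<mu>\<bar>) < \<bar>T l\<bar>"
  shows "sgn (sum T A) = sgn (T l)"
proof -
  have "sum T A = T l + (\<Sum>\<mu>\<in>A - {l}. T \<mu>)"
    using assms by (simp add: sum.remove)
  moreover have "\<bar>\<Sum>\<mu>\<in>A - {l}. T \<mu>\<bar> < \<bar>T l\<bar>"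
    using sum_abs[of T "A - {l}"] assms(3) by linarith
  ultimately show ?thesis
    by (auto simp: sgn_if abs_if split: if_splits)
qed

lemma flip_gain_bounds:
  fixes e :: real
  assumes "e = 1 \<or> e = -1"
  shows "sgn (1 - exp (- 2 * e)) = e"
    and "1 - exp (-2) \<le> \<bar>1 - exp (- 2 * e)\<bar>"
    and "\<bar>1 - exp (- 2 * e)\<bar> \<le> exp 2 - 1"
proof -
  have "exp (2::real) \<ge> 3"
    using exp_ge_add_one_self[of 2] by simp
  moreover have "0 < exp (-2::real)" and "exp (-2::real) < 1"
    by simp_all
  ultimately show "sgn (1 - exp (- 2 * e)) = e" "1 - exp (-2) \<le> \<bar>1 - exp (- 2 * e)\<bar>"
    "\<bar>1 - exp (- 2 * e)\<bar> \<le> exp 2 - 1"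
    using assms by (smt (verit) sgn_neg sgn_pos)+
qed

lemma capacity_margin:
  fixes M n \<tau> \<rho> :: real
  assumes "M \<le> exp (2 * n * (\<tau> - 2 * \<rho>)) * (1 - exp (-2)) / (2 * exp 2)"
  shows "(M - 1) * (exp (n - 2 * (\<tau> - \<rho>) * n) * (exp 2 - 1)) < exp (n - 2 * \<rho> * n) * (1 - exp (-2))"
proof -
  define X where "X = exp (2 * n * (\<tau> - 2 * \<rho>))"
  define B where "B = exp (n - 2 * (\<tau> - \<rho>) * n)"
  have "M * exp 2 \<le> X * (1 - exp (-2)) / 2"
    using assms by (simp add: X_def field_simps)
  also have "\<dots> < X"
    using exp_gt_zero[of "-2"] by (simp add: X_def, linarith)
  finally have "(M - 1) * exp 2 < X"
    using exp_gt_zero[of 2] by (simp only: left_diff_distrib mult_1_left)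
  have "(M - 1) * (B * (exp 2 - 1)) = (M - 1) * exp 2 * (B * (1 - exp (-2)))"
    by (simp add: algebra_simps exp_add[symmetric])
  also have "\<dots> < X * (B * (1 - exp (-2)))"
    using \<open>(M - 1) * exp 2 < X\<close> by (intro mult_strict_right_mono) (auto simp: B_def)
  also have "\<dots> = exp (n - 2 * \<rho> * n) * (1 - exp (-2))"
    by (simp add: X_def B_def exp_add[symmetric] algebra_simps)
  finally show ?thesis
    unfolding B_def .
qed

lemma flip_crosstalk_lt_signal:
  fixes x :: "nat \<Rightarrow> real" and \<xi> :: "nat \<Rightarrow> nat \<Rightarrow> real"
  assumes memories: "\<forall>\<mu>\<in>{1..M}. pm1_vec N (\<xi> \<mu>)" and "pm1_vec N x" and "i < N"
    and separated: "\<forall>\<mu>\<in>{1..M}. \<forall>\<nu>\<in>{1..M}. \<mu> \<noteq> \<nu> \<longrightarrow>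
      real (hamming N (\<xi> \<mu>) (\<xi> \<nu>)) \<ge> \<tau> * real N"
    and capacity: "real M \<le> exp (2 * real N * (\<tau> - 2 * \<rho>)) * (1 - exp (-2)) / (2 * exp 2)"
    and "l \<in> {1..M}" and near: "real (hamming N x (\<xi> l)) \<le> \<rho> * real N"
  defines "T \<equiv> \<lambda>\<mu>. exp (\<Sum>j<N. x j * \<xi> \<mu> j) * (1 - exp (- 2 * (x i * \<xi> \<mu> i)))"
  shows "(\<Sum>\<mu>\<in>{1..M} - {l}. \<bar>T \<mu>\<bar>) < \<bar>T l\<bar>"
proof -
  have sign: "x i * \<xi> \<mu> i = 1 \<or> x i * \<xi> \<mu> i = -1" if "\<mu> \<in> {1..M}" for \<mu>
    using memories that \<open>pm1_vec N x\<close> \<open>i < N\<close> unfolding pm1_vec_def by fastforce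
  have far: "\<bar>T \<mu>\<bar> \<le> exp (real N - 2 * (\<tau> - \<rho>) * real N) * (exp 2 - 1)"
    if "\<mu> \<in> {1..M} - {l}" for \<mu>
  proof -
    have "\<tau> * real N \<le> real (hamming N (\<xi> l) (\<xi> \<mu>))"
      using separated that \<open>l \<in> {1..M}\<close> by auto
    also have "\<dots> \<le> real (hamming N (\<xi> l) x) + real (hamming N x (\<xi> \<mu>))"
      unfolding of_nat_add[symmetric] of_nat_le_iff by (rule hamming_triangle)
    finally have "(\<Sum>j<N. x j * \<xi> \<mu> j) \<le> real N - 2 * (\<tau> - \<rho>) * real N"
      using near hamming_commute[of N x "\<xi> l"] pm1_vec_inner_hamming[OF \<open>pm1_vec N x\<close>, of "\<xi> \<mu>"]
        memories that
      by (auto simp: algebra_simps)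
    then show ?thesis
      unfolding T_def abs_mult using flip_gain_bounds(3)[OF sign] that by (intro mult_mono) auto
  qed
  have "(\<Sum>\<mu>\<in>{1..M} - {l}. \<bar>T \<mu>\<bar>)
      \<le> (\<Sum>\<mu>\<in>{1..M} - {l}. exp (real N - 2 * (\<tau> - \<rho>) * real N) * (exp 2 - 1))"
    by (rule sum_mono) (rule far)
  also have "\<dots> = (real M - 1) * (exp (real N - 2 * (\<tau> - \<rho>) * real N) * (exp 2 - 1))"
    using \<open>l \<in> {1..M}\<close> by (simp add: of_nat_diff)
  also have "\<dots> < exp (real N - 2 * \<rho> * real N) * (1 - exp (-2))"
    using capacity by (rule capacity_margin)
  also have "\<dots> \<le> \<bar>T l\<bar>"
  proof -
    have "real N - 2 * \<rho> * real N \<le> (\<Sum>j<N. x j * \<xi> l j)"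
      using near pm1_vec_inner_hamming[OF \<open>pm1_vec N x\<close>, of "\<xi> l"] memories \<open>l \<in> {1..M}\<close> by auto
    then show ?thesis
      unfolding T_def abs_mult using flip_gain_bounds(2)[OF sign] \<open>l \<in> {1..M}\<close>
      by (intro mult_mono) auto
  qed
  finally show ?thesis .
qed

theorem theorem1:
  fixes N M r :: nat and \<xi> :: "nat \<Rightarrow> nat \<Rightarrow> real" and \<tau> \<rho> s :: real
    and l i :: nat and \<xi>hat :: "nat \<Rightarrow> real"
  assumes "N > 0" and "M > 0" and "r > 0"
    and "\<forall>\<mu>\<in>{1..M}. pm1_vec N (\<xi> \<mu>)"
    and "\<tau> > 0"
    and "\<forall>\<mu>\<in>{1..M}. \<forall>\<nu>\<in>{1..M}. \<mu> \<noteq> \<nu> \<longrightarrow> real (hamming N (\<xi> \<mu>) (\<xi> \<nu>)) \<ge> \<tau> * real N"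
    and "0 < \<rho>" and "\<rho> < \<tau> / 2"
    and "real M \<le> exp (2 * real N * (\<tau> - 2 * \<rho>)) * (1 - exp (-2)) / (2 * exp 2)"
    and "0 < s" and "s < 1"
    and "l \<in> {1..M}" and "pm1_vec N \<xi>hat"
    and "real (hamming N \<xi>hat (\<xi> l)) \<le> \<rho> * real N"
    and "i < N"
  shows "let \<xi>tilde = \<xi>hat(i := - \<xi>hat i);
             ExpDelta = (\<integral>\<omega>. E_rand s N r \<omega> M \<xi> \<xi>tilde - E_rand s N r \<omega> M \<xi> \<xi>hat
                           \<partial>gauss_features N r)
         in (\<xi>hat i = \<xi> l i \<longrightarrow> ExpDelta > 0) \<and> (\<xi>hat i = - \<xi> l i \<longrightarrow> ExpDelta < 0)"
proof -
  define T where "T \<mu> = exp (\<Sum>j<N. \<xi>hat j * \<xi> \<mu> j) * (1 - exp (- 2 * (\<xi>hat i * \<xi> \<mu> i)))" for \<mu>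
  have "\<xi>hat i = 1 \<or> \<xi>hat i = -1" and "\<xi> l i = 1 \<or> \<xi> l i = -1"
    using assms(4,12,13,15) unfolding pm1_vec_def by auto
  then have sign: "\<xi>hat i * \<xi> l i = 1 \<or> \<xi>hat i * \<xi> l i = -1"
    and agree: "\<xi>hat i = \<xi> l i \<Longrightarrow> \<xi>hat i * \<xi> l i = 1"
    and disagree: "\<xi>hat i = - \<xi> l i \<Longrightarrow> \<xi>hat i * \<xi> l i = -1"
    by auto
  have "s < 4 / 3"
    using \<open>s < 1\<close> by simp
  have expected_change: "(\<integral>\<omega>. E_rand s N r \<omega> M \<xi> (\<xi>hat(i := - \<xi>hat i)) - E_rand s N r \<omega> M \<xi> \<xi>hat
      \<partial>gauss_features N r) = sum T {1..M}"
    unfolding T_def by (rule expectation_E_rand_flip[OF \<open>0 < s\<close> \<open>s < 4 / 3\<close> \<open>r > 0\<close> \<open>i < N\<close>])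
  have "sgn (sum T {1..M}) = sgn (T l)"
    using flip_crosstalk_lt_signal[OF assms(4,13,15,6,9,12,14)] \<open>l \<in> {1..M}\<close>
    by (intro sgn_sum_dominant_term) (simp_all add: T_def)
  also have "\<dots> = \<xi>hat i * \<xi> l i"
    using flip_gain_bounds(1)[OF sign] by (simp add: T_def sgn_mult)
  finally show ?thesis
    unfolding Let_def expected_change using agree disagree by (metis sgn_1_pos sgn_1_neg)
qed

end
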